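(* Let $\mathcal{M}$ be a separable metric space, let $f:\mathcal{M}\to\mathcal{M}$ be a continuous bijection with continuous inverse, and let $\mathcal{X}\subseteq\mathcal{M}$ be forward invariant under $f$ and path connected. Consider $x_{k+1}=f(x_k)$ on $\mathcal{X}$ with set of $\omega$-limit sets $\mathcal{W}$ and set of $\alpha$-limit sets $\mathcal{A}$. Suppose: (T1) there exist a separable metric space $\mathcal{Z}$, a continuous bijection $g:\mathcal{Z}\to\mathcal{Z}$ with continuous inverse, and a continuous map $F:\mathcal{X}\to\mathcal{Z}$ with $F\circ f=g\circ F$ on $\mathcal{X}$, such that $z_{k+1}=g(z_k)$ and $z_{k+1}=g^{-1}(z_k)$ on $\mathcal{Z}$ both have closed basins; (T2) every trajectory in $\mathcal{X}$ is forward precompact or backward precompact in $\mathcal{X}$; (T3) $\mathcal{W}\cup\mathcal{A}$ is countable; (T4) for every $\Omega\in\mathcal{W}$ there is a trajectory forward precompact in $\mathcal{X}$ starting in $D^+_{\mathcal{X}}(\Omega)$, and for every $\Gamma\in\mathcal{A}$ there is a trajectory backward precompact in $\mathcal{X}$ starting in $D^-_{\mathcal{X}}(\Gamma)$. If moreover $F$ is one-to-one, then $\mathcal{W}\cup\mathcal{A}$ has exactly one element.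
   Context: Forward orbit of $\xi$: $\{f^k(\xi)\mid k\in\mathbb{N}\}$; backward orbit: $\{f^{-k}(\xi)\mid k\in\mathbb{N}\}$. A set $S\subseteq\mathcal{X}$ is precompact if its closure in $\mathcal{X}$ is compact; a trajectory through $\xi$ is forward (backward) precompact if its forward (backward) orbit is precompact. $\omega_{\mathcal{X}}(\xi)$ is the set of $x\in\mathcal{X}$ with $f^{k_j}(\xi)\to x$ for some $k_j\to\infty$; $\alpha_{\mathcal{X}}(\xi)$ likewise with $f^{-k_j}$. $\mathcal{W}=\{\omega_{\mathcal{X}}(\xi)\mid\xi\in\mathcal{X}\}$, $\mathcal{A}=\{\alpha_{\mathcal{X}}(\xi)\mid\xi\in\mathcal{X}\}$, $D^+_{\mathcal{X}}(\Omega)=\{\xi\in\mathcal{X}\mid\omega_{\mathcal{X}}(\xi)=\Omega\}$, $D^-_{\mathcal{X}}(\Gamma)=\{\xi\in\mathcal{X}\mid\alpha_{\mathcal{X}}(\xi)=\Gamma\}$. A system has closed basins if the domain of attraction of each of its $\omega$-limit sets is closed (for a time-reversed system: each domain of repulsion of each $\alpha$-limit set of the original system is closed). Same notions on $\mathcal{Z}$ for $g$. *)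

theory Defs
  imports "HOL-Analysis.Analysis"
begin

definition separable_space :: "'a::metric_space itself \<Rightarrow> bool" where
  "separable_space _ \<longleftrightarrow> (\<exists>D::'a set. countable D \<and> closure D = UNIV)"

definition fwd_orbit :: "('a \<Rightarrow> 'a) \<Rightarrow> 'a \<Rightarrow> 'a set" where
  "fwd_orbit f xi = {(f ^^ k) xi | k. True}"

definition bwd_orbit :: "('a \<Rightarrow> 'a) \<Rightarrow> 'a \<Rightarrow> 'a set" where
  "bwd_orbit f xi = {(inv f ^^ k) xi | k. True}"

definition precompact_in :: "'a::metric_space set \<Rightarrow> 'a set \<Rightarrow> bool" where
  "precompact_in X S \<longleftrightarrow> S \<subseteq> X \<and> compact (X \<inter> closure S)"

definition omega_limit :: "('a::metric_space \<Rightarrow> 'a) \<Rightarrow> 'a set \<Rightarrow> 'a \<Rightarrow> 'a set" where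
  "omega_limit f X xi = {x \<in> X. \<exists>k::nat \<Rightarrow> nat. filterlim k at_top sequentially \<and>
        (\<lambda>j. (f ^^ k j) xi) \<longlonglongrightarrow> x}"

definition alpha_limit :: "('a::metric_space \<Rightarrow> 'a) \<Rightarrow> 'a set \<Rightarrow> 'a \<Rightarrow> 'a set" where
  "alpha_limit f X xi = {x \<in> X. \<exists>k::nat \<Rightarrow> nat. filterlim k at_top sequentially \<and>
        (\<lambda>j. (inv f ^^ k j) xi) \<longlonglongrightarrow> x}"

definition omega_sets :: "('a::metric_space \<Rightarrow> 'a) \<Rightarrow> 'a set \<Rightarrow> 'a set set" where
  "omega_sets f X = {omega_limit f X xi | xi. xi \<in> X}"

definition alpha_sets :: "('a::metric_space \<Rightarrow> 'a) \<Rightarrow> 'a set \<Rightarrow> 'a set set" where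
  "alpha_sets f X = {alpha_limit f X xi | xi. xi \<in> X}"

definition dom_attr :: "('a::metric_space \<Rightarrow> 'a) \<Rightarrow> 'a set \<Rightarrow> 'a set \<Rightarrow> 'a set" where
  "dom_attr f X \<Omega> = {xi \<in> X. omega_limit f X xi = \<Omega>}"

definition dom_rep :: "('a::metric_space \<Rightarrow> 'a) \<Rightarrow> 'a set \<Rightarrow> 'a set \<Rightarrow> 'a set" where
  "dom_rep f X \<Gamma> = {xi \<in> X. alpha_limit f X xi = \<Gamma>}"

text \<open>Closed basins of the system x_{k+1} = f x_k on X (domain of attraction of every
  omega-limit set closed), and of the time-reversed system x_{k+1} = f^{-1} x_k
  (domain of repulsion of every alpha-limit set of f closed).\<close>
definition closed_basins :: "('a::metric_space \<Rightarrow> 'a) \<Rightarrow> 'a set \<Rightarrow> bool" where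
  "closed_basins f X \<longleftrightarrow> (\<forall>\<Omega> \<in> omega_sets f X. closed (dom_attr f X \<Omega>))"

definition closed_basins_rev :: "('a::metric_space \<Rightarrow> 'a) \<Rightarrow> 'a set \<Rightarrow> bool" where
  "closed_basins_rev f X \<longleftrightarrow> (\<forall>\<Gamma> \<in> alpha_sets f X. closed (dom_rep f X \<Gamma>))"

end

theory Submission
  imports Defs
begin

(* Since F is continuous and injective on X, it identifies each omega-limit set of f that contains
   a point with precompact forward orbit with an omega-limit set of g. The closed basins of g then
   show that every omega-limit set Omega of f is the omega-limit set of each of its own points and
   that its domain of attraction is the preimage under F of a closed basin of g, hence closed in X.
   The first fact, applied to f and to its inverse, makes the alpha-limit sets of f coincide with
   its omega-limit sets. The second partitions the path connected set X into countably many
   disjoint nonempty closed domains of attraction, and by Sierpinski's theorem, pulled back along a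
   path, there is only one. *)

lemma funpow_in_fwd_orbit: "(h ^^ n) \<xi> \<in> fwd_orbit h \<xi>"
  by (auto simp: fwd_orbit_def)

lemma fwd_orbit_subset:
  assumes "\<xi> \<in> S" "h ` S \<subseteq> S"
  shows "fwd_orbit h \<xi> \<subseteq> S"
proof -
  have "(h ^^ n) \<xi> \<in> S" for n
    by (induction n) (use assms in auto)
  then show ?thesis
    by (auto simp: fwd_orbit_def)
qed

lemma omega_limit_eq_Inter_closure:
  "omega_limit h X \<xi> = X \<inter> (\<Inter>N. closure ((\<lambda>k. (h ^^ k) \<xi>) ` {N..}))"
proof (intro set_eqI iffI)
  fix x assume "x \<in> omega_limit h X \<xi>"
  then obtain k where "x \<in> X" and k: "filterlim k at_top sequentially"
    and lim: "(\<lambda>j. (h ^^ k j) \<xi>) \<longlonglongrightarrow> x"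
    by (auto simp: omega_limit_def)
  have "x \<in> closure ((\<lambda>k. (h ^^ k) \<xi>) ` {N..})" for N
  proof (rule Lim_in_closed_set[OF closed_closure _ _ lim])
    show "eventually (\<lambda>j. (h ^^ k j) \<xi> \<in> closure ((\<lambda>k. (h ^^ k) \<xi>) ` {N..})) sequentially"
      using k closure_subset by (fastforce simp: filterlim_at_top elim: eventually_mono)
  qed simp
  with \<open>x \<in> X\<close> show "x \<in> X \<inter> (\<Inter>N. closure ((\<lambda>k. (h ^^ k) \<xi>) ` {N..}))"
    by blast
next
  fix x assume x: "x \<in> X \<inter> (\<Inter>N. closure ((\<lambda>k. (h ^^ k) \<xi>) ` {N..}))"
  have "\<exists>k\<ge>n. dist ((h ^^ k) \<xi>) x < inverse (Suc n)" for n
  proof -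
    have "x \<in> closure ((\<lambda>k. (h ^^ k) \<xi>) ` {n..})"
      using x by blast
    moreover have "inverse (real (Suc n)) > 0"
      by simp
    ultimately obtain y where "y \<in> (\<lambda>k. (h ^^ k) \<xi>) ` {n..}" "dist y x < inverse (Suc n)"
      unfolding closure_approachable by blast
    then show ?thesis
      by auto
  qed
  then obtain k where k: "\<And>n. k n \<ge> n" "\<And>n. dist ((h ^^ k n) \<xi>) x < inverse (Suc n)"
    by metis
  have "filterlim k at_top sequentially"
    using filterlim_ident by (rule filterlim_at_top_mono) (simp add: k)
  moreover have "(\<lambda>n. dist ((h ^^ k n) \<xi>) x) \<longlonglongrightarrow> 0"
  proof (rule Lim_null_comparison[OF always_eventually LIMSEQ_inverse_real_of_nat], rule allI)
    show "norm (dist ((h ^^ k n) \<xi>) x) \<le> inverse (real (Suc n))" for n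
      using k(2)[of n] by simp
  qed
  then have "(\<lambda>n. (h ^^ k n) \<xi>) \<longlonglongrightarrow> x"
    by (rule tendsto_dist_iff[THEN iffD2])
  ultimately show "x \<in> omega_limit h X \<xi>"
    using x unfolding omega_limit_def by blast
qed

lemma closedin_omega_limit: "closedin (top_of_set X) (omega_limit h X \<xi>)"
  unfolding omega_limit_eq_Inter_closure by (intro closedin_closed_Int closed_INT) simp

lemma omega_limit_subset_closure: "omega_limit h X \<xi> \<subseteq> X \<inter> closure (fwd_orbit h \<xi>)"
proof -
  have "(\<lambda>k. (h ^^ k) \<xi>) ` {0..} = fwd_orbit h \<xi>"
    by (auto simp: fwd_orbit_def)
  then show ?thesis
    unfolding omega_limit_eq_Inter_closure by blast
qed

lemma omega_limit_subset_closedin_invariant: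
  assumes "closedin (top_of_set X) S" "x \<in> S" "h ` S \<subseteq> S"
  shows "omega_limit h X x \<subseteq> S"
proof -
  obtain T where "closed T" "S = X \<inter> T"
    using assms(1) by (auto simp: closedin_closed)
  then have "X \<inter> closure (fwd_orbit h x) \<subseteq> S"
    using fwd_orbit_subset[OF assms(2,3)] closure_minimal by blast
  then show ?thesis
    using omega_limit_subset_closure by blast
qed

lemma omega_limit_shift: "omega_limit h X (h \<xi>) = omega_limit h X \<xi>"
proof -
  define T where "T N = closure ((\<lambda>k. (h ^^ k) \<xi>) ` {N..})" for N
  have "(\<lambda>k. (h ^^ k) (h \<xi>)) ` {N..} = (\<lambda>k. (h ^^ k) \<xi>) ` {Suc N..}" for N
  proof -
    have "m \<in> Suc ` {N..}" if "m \<ge> Suc N" for m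
      using that by (intro image_eqI[of m Suc "m - 1"]) auto
    then have "{Suc N..} = Suc ` {N..}"
      by auto
    then show ?thesis
      by (simp add: image_image funpow_Suc_right del: funpow.simps)
  qed
  then have "omega_limit h X (h \<xi>) = X \<inter> (\<Inter>N. T (Suc N))"
    by (simp add: omega_limit_eq_Inter_closure T_def)
  also have "(\<Inter>N. T (Suc N)) = (\<Inter>N. T N)"
  proof -
    have "T (Suc N) \<subseteq> T N" for N
      unfolding T_def by (rule closure_mono, rule image_mono) auto
    then show ?thesis
      by blast
  qed
  finally show ?thesis
    by (simp add: omega_limit_eq_Inter_closure T_def)
qed

lemma omega_limit_funpow: "omega_limit h X ((h ^^ n) \<xi>) = omega_limit h X \<xi>"
  by (induction n) (simp_all add: omega_limit_shift)

lemma omega_limit_eq_of_mem: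
  assumes "closed_basins G UNIV" "z' \<in> omega_limit G UNIV z"
  shows "omega_limit G UNIV z' = omega_limit G UNIV z"
proof -
  let ?B = "dom_attr G UNIV (omega_limit G UNIV z)"
  have "closed ?B"
    using assms(1) by (auto simp: closed_basins_def omega_sets_def)
  obtain k where lim: "(\<lambda>j. (G ^^ k j) z) \<longlonglongrightarrow> z'"
    using assms(2) by (auto simp: omega_limit_def)
  have "z' \<in> ?B"
    by (rule closed_sequentially[OF \<open>closed ?B\<close> _ lim]) (simp add: dom_attr_def omega_limit_funpow)
  then show ?thesis
    by (simp add: dom_attr_def)
qed

lemma omega_limit_subset: "omega_limit h X \<xi> \<subseteq> X"
  by (auto simp: omega_limit_def)

lemma omega_set_subset: "\<Omega> \<in> omega_sets h X \<Longrightarrow> \<Omega> \<subseteq> X"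
  by (auto simp: omega_sets_def omega_limit_def)

lemma closedin_omega_set:
  assumes "\<Omega> \<in> omega_sets h X"
  shows "closedin (top_of_set X) \<Omega>"
  using assms closedin_omega_limit by (auto simp: omega_sets_def)

lemma precompact_fwd_orbitD:
  assumes "precompact_in X (fwd_orbit h \<xi>)"
  shows "compact (X \<inter> closure (fwd_orbit h \<xi>))" "(h ^^ n) \<xi> \<in> X \<inter> closure (fwd_orbit h \<xi>)"
proof -
  show "compact (X \<inter> closure (fwd_orbit h \<xi>))"
    using assms by (simp add: precompact_in_def)
  have "fwd_orbit h \<xi> \<subseteq> X"
    using assms by (simp add: precompact_in_def)
  then show "(h ^^ n) \<xi> \<in> X \<inter> closure (fwd_orbit h \<xi>)"
    using funpow_in_fwd_orbit[of n h \<xi>] closure_subset[of "fwd_orbit h \<xi>"] by blast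
qed

lemma omega_limit_nonempty:
  assumes "precompact_in X (fwd_orbit h \<xi>)"
  shows "omega_limit h X \<xi> \<noteq> {}"
proof -
  let ?K = "X \<inter> closure (fwd_orbit h \<xi>)"
  have K: "compact ?K" and orbit: "\<forall>n. (h ^^ n) \<xi> \<in> ?K"
    using precompact_fwd_orbitD[OF assms] by blast+
  from orbit obtain l r where "l \<in> ?K" "strict_mono r" "((\<lambda>n. (h ^^ n) \<xi>) \<circ> r) \<longlonglongrightarrow> l"
    by (rule seq_compactE[OF compact_imp_seq_compact[OF K]])
  then have "l \<in> omega_limit h X \<xi>"
    using filterlim_subseq by (auto simp: omega_limit_def o_def)
  then show ?thesis
    by blast
qed

lemma omega_limit_closed_under_map:
  assumes "precompact_in X (fwd_orbit h \<xi>)" "continuous_on UNIV \<phi>"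
    and "filterlim \<sigma> at_top sequentially"
    and "eventually (\<lambda>k. \<phi> ((h ^^ k) \<xi>) = (h ^^ \<sigma> k) \<xi>) sequentially"
    and "x \<in> omega_limit h X \<xi>"
  shows "\<phi> x \<in> omega_limit h X \<xi>"
proof -
  let ?K = "X \<inter> closure (fwd_orbit h \<xi>)"
  obtain k where k: "filterlim k at_top sequentially" and lim: "(\<lambda>j. (h ^^ k j) \<xi>) \<longlonglongrightarrow> x"
    using assms(5) by (auto simp: omega_limit_def)
  have "(\<lambda>j. \<phi> ((h ^^ k j) \<xi>)) \<longlonglongrightarrow> \<phi> x"
    using assms(2) lim by (rule continuous_on_tendsto_compose) simp_all
  moreover have "eventually (\<lambda>j. \<phi> ((h ^^ k j) \<xi>) = (h ^^ \<sigma> (k j)) \<xi>) sequentially"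
    by (rule eventually_compose_filterlim[OF assms(4) k])
  ultimately have lim': "(\<lambda>j. (h ^^ \<sigma> (k j)) \<xi>) \<longlonglongrightarrow> \<phi> x"
    by (rule Lim_transform_eventually)
  have "closed ?K"
    using compact_imp_closed precompact_fwd_orbitD(1)[OF assms(1)] by blast
  then have "\<phi> x \<in> ?K"
    by (rule closed_sequentially[OF _ _ lim']) (rule precompact_fwd_orbitD(2)[OF assms(1)])
  then have "\<phi> x \<in> X"
    by blast
  moreover have "filterlim (\<lambda>j. \<sigma> (k j)) at_top sequentially"
    using assms(3) k by (rule filterlim_compose)
  ultimately show ?thesis
    using lim' by (auto simp: omega_limit_def)
qed

lemma omega_limit_invariant:
  assumes "precompact_in X (fwd_orbit h \<xi>)" "continuous_on UNIV h" "x \<in> omega_limit h X \<xi>"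
  shows "h x \<in> omega_limit h X \<xi>"
  by (rule omega_limit_closed_under_map[OF assms(1,2) filterlim_Suc _ assms(3)]) simp

lemma omega_limit_inv_invariant:
  assumes "precompact_in X (fwd_orbit h \<xi>)" "inj h" "continuous_on UNIV (inv h)"
    and "x \<in> omega_limit h X \<xi>"
  shows "inv h x \<in> omega_limit h X \<xi>"
proof (rule omega_limit_closed_under_map[OF assms(1,3) filterlim_minus_const_nat_at_top[of 1] _ assms(4)])
  have "inv h ((h ^^ k) \<xi>) = (h ^^ (k - 1)) \<xi>" if "k \<ge> 1" for k
    using that assms(2) by (cases k) simp_all
  then show "eventually (\<lambda>k. inv h ((h ^^ k) \<xi>) = (h ^^ (k - 1)) \<xi>) sequentially"
    unfolding eventually_sequentially by blast
qed

lemma precompact_fwd_orbit_of_omega_limit: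
  assumes "precompact_in X (fwd_orbit h \<xi>)" "continuous_on UNIV h" "x \<in> omega_limit h X \<xi>"
  shows "precompact_in X (fwd_orbit h x)"
proof -
  let ?K = "X \<inter> closure (fwd_orbit h \<xi>)"
  have K: "compact ?K"
    using assms(1) by (simp add: precompact_in_def)
  have "fwd_orbit h x \<subseteq> omega_limit h X \<xi>"
    using assms(3) omega_limit_invariant[OF assms(1,2)] by (intro fwd_orbit_subset) auto
  then have orbit: "fwd_orbit h x \<subseteq> ?K"
    using omega_limit_subset_closure by blast
  then have "closure (fwd_orbit h x) \<subseteq> ?K"
    using compact_imp_closed[OF K] by (rule closure_minimal)
  then have "X \<inter> closure (fwd_orbit h x) = ?K \<inter> closure (fwd_orbit h x)"
    by blast
  then have "compact (X \<inter> closure (fwd_orbit h x))"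
    using K by auto
  with orbit show ?thesis
    by (auto simp: precompact_in_def)
qed

lemma funpow_semiconj:
  assumes semiconj: "\<forall>x\<in>X. h x \<in> X \<longrightarrow> F (h x) = G (F x)"
    and orbit: "fwd_orbit h \<xi> \<subseteq> X"
  shows "F ((h ^^ n) \<xi>) = (G ^^ n) (F \<xi>)"
proof (induction n)
  case (Suc n)
  have "(h ^^ n) \<xi> \<in> X" "h ((h ^^ n) \<xi>) \<in> X"
    using orbit funpow_in_fwd_orbit[of n h \<xi>] funpow_in_fwd_orbit[of "Suc n" h \<xi>] by auto
  then have "F (h ((h ^^ n) \<xi>)) = G (F ((h ^^ n) \<xi>))"
    using semiconj by blast
  with Suc show ?case
    by simp
qed simp

lemma image_omega_limit_subset:
  assumes cont: "continuous_on X F"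
    and semiconj: "\<forall>x\<in>X. h x \<in> X \<longrightarrow> F (h x) = G (F x)"
    and orbit: "fwd_orbit h \<xi> \<subseteq> X"
  shows "F ` omega_limit h X \<xi> \<subseteq> omega_limit G UNIV (F \<xi>)"
proof
  fix z assume "z \<in> F ` omega_limit h X \<xi>"
  then obtain x k where "z = F x" "x \<in> X" "filterlim k at_top sequentially"
    and lim: "(\<lambda>j. (h ^^ k j) \<xi>) \<longlonglongrightarrow> x"
    by (auto simp: omega_limit_def)
  moreover have "(\<lambda>j. F ((h ^^ k j) \<xi>)) \<longlonglongrightarrow> F x"
    using orbit funpow_in_fwd_orbit[of _ h \<xi>] \<open>x \<in> X\<close>
    by (intro continuous_on_tendsto_compose[OF cont lim]) (auto intro!: always_eventually)
  ultimately show "z \<in> omega_limit G UNIV (F \<xi>)"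
    by (auto simp: omega_limit_def funpow_semiconj[OF semiconj orbit])
qed

lemma image_omega_limit_eq:
  assumes cont: "continuous_on X F"
    and semiconj: "\<forall>x\<in>X. h x \<in> X \<longrightarrow> F (h x) = G (F x)"
    and precompact: "precompact_in X (fwd_orbit h \<xi>)"
  shows "F ` omega_limit h X \<xi> = omega_limit G UNIV (F \<xi>)"
proof
  let ?K = "X \<inter> closure (fwd_orbit h \<xi>)"
  have orbit: "fwd_orbit h \<xi> \<subseteq> X" and K: "compact ?K"
    using precompact by (auto simp: precompact_in_def)
  show "F ` omega_limit h X \<xi> \<subseteq> omega_limit G UNIV (F \<xi>)"
    by (rule image_omega_limit_subset[OF cont semiconj orbit])
  show "omega_limit G UNIV (F \<xi>) \<subseteq> F ` omega_limit h X \<xi>"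
  proof
    fix z assume "z \<in> omega_limit G UNIV (F \<xi>)"
    then obtain k where k: "filterlim k at_top sequentially"
      and lim_z: "(\<lambda>j. (G ^^ k j) (F \<xi>)) \<longlonglongrightarrow> z"
      by (auto simp: omega_limit_def)
    have "\<forall>j. (h ^^ k j) \<xi> \<in> ?K"
      using precompact_fwd_orbitD(2)[OF precompact] by blast
    then obtain l r where l: "l \<in> ?K" and r: "strict_mono r"
      and "((\<lambda>j. (h ^^ k j) \<xi>) \<circ> r) \<longlonglongrightarrow> l"
      by (rule seq_compactE[OF compact_imp_seq_compact[OF K]])
    then have lim_l: "(\<lambda>j. (h ^^ k (r j)) \<xi>) \<longlonglongrightarrow> l"
      by (simp add: o_def)
    have "l \<in> omega_limit h X \<xi>"
      using l lim_l filterlim_compose[OF k filterlim_subseq[OF r]] by (auto simp: omega_limit_def)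
    moreover have "(\<lambda>j. F ((h ^^ k (r j)) \<xi>)) \<longlonglongrightarrow> F l"
      using l orbit funpow_in_fwd_orbit[of _ h \<xi>]
      by (intro continuous_on_tendsto_compose[OF cont lim_l]) (auto intro!: always_eventually)
    then have "(\<lambda>j. (G ^^ k (r j)) (F \<xi>)) \<longlonglongrightarrow> F l"
      by (simp add: funpow_semiconj[OF semiconj orbit])
    moreover have "(\<lambda>j. (G ^^ k (r j)) (F \<xi>)) \<longlonglongrightarrow> z"
      using LIMSEQ_subseq_LIMSEQ[OF lim_z r] by (simp add: o_def)
    ultimately show "z \<in> F ` omega_limit h X \<xi>"
      using LIMSEQ_unique by blast
  qed
qed

text \<open>Hypotheses (T1) and (T4) for one direction of time. The semiconjugacy is only required
  where both \<open>x\<close> and \<open>h x\<close> lie in \<open>X\<close>, so that the locale also applies to \<open>h\<^sup>-\<^sup>1\<close>, under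
  which \<open>X\<close> need not be invariant.\<close>
locale closed_basins_semiconj =
  fixes h :: "'m::metric_space \<Rightarrow> 'm" and X :: "'m set"
    and G :: "'z::metric_space \<Rightarrow> 'z" and F :: "'m \<Rightarrow> 'z"
  assumes bij_h: "bij h" and cont_h: "continuous_on UNIV h" and cont_inv_h: "continuous_on UNIV (inv h)"
    and F_cont: "continuous_on X F" and F_inj: "inj_on F X"
    and semiconj: "\<forall>x\<in>X. h x \<in> X \<longrightarrow> F (h x) = G (F x)"
    and G_basins: "closed_basins G UNIV"
    and precompact_in_basin:
      "\<And>\<Omega>. \<Omega> \<in> omega_sets h X \<Longrightarrow> \<exists>\<xi>\<in>dom_attr h X \<Omega>. precompact_in X (fwd_orbit h \<xi>)"
begin

lemma omega_setE:
  assumes "\<Omega> \<in> omega_sets h X"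
  obtains \<xi> where "\<xi> \<in> X" "omega_limit h X \<xi> = \<Omega>" "precompact_in X (fwd_orbit h \<xi>)"
  using precompact_in_basin[OF assms] by (auto simp: dom_attr_def)

lemma omega_set_nonempty:
  assumes "\<Omega> \<in> omega_sets h X"
  shows "\<Omega> \<noteq> {}"
proof -
  obtain \<xi> where \<xi>: "\<xi> \<in> X" "omega_limit h X \<xi> = \<Omega>" "precompact_in X (fwd_orbit h \<xi>)"
    using assms by (rule omega_setE)
  show ?thesis
    using omega_limit_nonempty[OF \<xi>(3)] \<xi>(2) by simp
qed

lemma omega_set_inv_invariant:
  assumes "\<Omega> \<in> omega_sets h X"
  shows "inv h ` \<Omega> \<subseteq> \<Omega>"
proof -
  obtain \<xi> where \<xi>: "\<xi> \<in> X" "omega_limit h X \<xi> = \<Omega>" "precompact_in X (fwd_orbit h \<xi>)"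
    using assms by (rule omega_setE)
  show ?thesis
    unfolding \<xi>(2)[symmetric]
    using omega_limit_inv_invariant[OF \<xi>(3) bij_is_inj[OF bij_h] cont_inv_h] by blast
qed

lemma precompact_fwd_orbit_of_omega_set:
  assumes "\<Omega> \<in> omega_sets h X" "x \<in> \<Omega>"
  shows "precompact_in X (fwd_orbit h x)"
proof -
  obtain \<xi> where \<xi>: "\<xi> \<in> X" "omega_limit h X \<xi> = \<Omega>" "precompact_in X (fwd_orbit h \<xi>)"
    using assms(1) by (rule omega_setE)
  show ?thesis
    using precompact_fwd_orbit_of_omega_limit[OF \<xi>(3) cont_h] assms(2) \<xi>(2) by simp
qed

lemma image_omega_set:
  assumes "\<Omega> \<in> omega_sets h X"
  shows "F ` \<Omega> \<in> omega_sets G UNIV"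
proof -
  obtain \<xi> where \<xi>: "\<xi> \<in> X" "omega_limit h X \<xi> = \<Omega>" "precompact_in X (fwd_orbit h \<xi>)"
    using assms by (rule omega_setE)
  have "F ` \<Omega> = omega_limit G UNIV (F \<xi>)"
    using image_omega_limit_eq[OF F_cont semiconj \<xi>(3)] \<xi>(2) by simp
  then show ?thesis
    by (auto simp: omega_sets_def)
qed

text \<open>All points of \<open>F ` \<Omega>\<close> lie in one closed basin of \<open>G\<close>, so by injectivity of \<open>F\<close> all
  points of \<open>\<Omega>\<close> have the same \<open>\<omega>\<close>-limit set.\<close>
lemma omega_limit_of_mem_omega_set:
  assumes \<Omega>: "\<Omega> \<in> omega_sets h X" and x: "x \<in> \<Omega>"
  shows "omega_limit h X x = \<Omega>"
proof -
  obtain \<xi> where \<xi>: "\<xi> \<in> X" "omega_limit h X \<xi> = \<Omega>" "precompact_in X (fwd_orbit h \<xi>)"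
    using \<Omega> by (rule omega_setE)
  have image_\<Omega>: "F ` \<Omega> = omega_limit G UNIV (F \<xi>)"
    using image_omega_limit_eq[OF F_cont semiconj \<xi>(3)] \<xi>(2) by simp
  have "F ` omega_limit h X x = omega_limit G UNIV (F x)"
    using image_omega_limit_eq[OF F_cont semiconj precompact_fwd_orbit_of_omega_set[OF \<Omega> x]] .
  also have "\<dots> = F ` \<Omega>"
  proof -
    have "F x \<in> omega_limit G UNIV (F \<xi>)"
      using x image_\<Omega> by blast
    then show ?thesis
      using omega_limit_eq_of_mem[OF G_basins] image_\<Omega> by simp
  qed
  finally show ?thesis
    by (simp add: inj_on_image_eq_iff[OF F_inj omega_limit_subset omega_set_subset[OF \<Omega>]])
qed

lemma image_omega_limit:
  assumes "\<xi> \<in> X" "fwd_orbit h \<xi> \<subseteq> X"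
  shows "F ` omega_limit h X \<xi> = omega_limit G UNIV (F \<xi>)"
proof -
  let ?\<Omega> = "omega_limit h X \<xi>"
  have \<Omega>: "?\<Omega> \<in> omega_sets h X"
    using assms(1) by (auto simp: omega_sets_def)
  then obtain x where x: "x \<in> ?\<Omega>"
    using omega_set_nonempty by blast
  have "F ` ?\<Omega> = F ` omega_limit h X x"
    by (simp add: omega_limit_of_mem_omega_set[OF \<Omega> x])
  also have "\<dots> = omega_limit G UNIV (F x)"
    by (rule image_omega_limit_eq[OF F_cont semiconj precompact_fwd_orbit_of_omega_set[OF \<Omega> x]])
  also have "\<dots> = omega_limit G UNIV (F \<xi>)"
  proof (rule omega_limit_eq_of_mem[OF G_basins])
    show "F x \<in> omega_limit G UNIV (F \<xi>)"
      using image_omega_limit_subset[OF F_cont semiconj assms(2)] x by blast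
  qed
  finally show ?thesis .
qed

lemma closedin_dom_attr:
  assumes "h ` X \<subseteq> X" "\<Omega> \<in> omega_sets h X"
  shows "closedin (top_of_set X) (dom_attr h X \<Omega>)"
proof -
  have "\<xi> \<in> dom_attr h X \<Omega> \<longleftrightarrow> \<xi> \<in> X \<inter> F -` dom_attr G UNIV (F ` \<Omega>)" for \<xi>
  proof (cases "\<xi> \<in> X")
    case True
    have "omega_limit G UNIV (F \<xi>) = F ` omega_limit h X \<xi>"
      using image_omega_limit[OF True fwd_orbit_subset[OF True assms(1)]] by simp
    moreover have "F ` omega_limit h X \<xi> = F ` \<Omega> \<longleftrightarrow> omega_limit h X \<xi> = \<Omega>"
      by (rule inj_on_image_eq_iff[OF F_inj omega_limit_subset omega_set_subset[OF assms(2)]])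
    ultimately show ?thesis
      using True by (auto simp: dom_attr_def)
  qed (simp add: dom_attr_def)
  then have "dom_attr h X \<Omega> = X \<inter> F -` dom_attr G UNIV (F ` \<Omega>)"
    by (rule set_eqI)
  moreover have "closed (dom_attr G UNIV (F ` \<Omega>))"
    using G_basins image_omega_set[OF assms(2)] by (simp add: closed_basins_def)
  ultimately show ?thesis
    using continuous_closedin_preimage[OF F_cont] by metis
qed

end

text \<open>For \<open>x \<in> \<Omega>\<close> the \<open>\<omega>\<close>-limit set \<open>\<Gamma>\<close> of \<open>x\<close> under \<open>h\<^sup>-\<^sup>1\<close> lies in the closed
  \<open>h\<^sup>-\<^sup>1\<close>-invariant set \<open>\<Omega>\<close>; conversely \<open>\<Omega>\<close>, being the \<open>\<omega>\<close>-limit set under \<open>h\<close> of any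
  point of \<open>\<Gamma>\<close>, lies in the closed \<open>h\<close>-invariant set \<open>\<Gamma>\<close>.\<close>
lemma omega_sets_subset_omega_sets_inv:
  assumes fwd: "closed_basins_semiconj h X G F"
    and bwd: "closed_basins_semiconj (inv h) X G' F"
  shows "omega_sets h X \<subseteq> omega_sets (inv h) X"
proof
  interpret fwd: closed_basins_semiconj h X G F by (fact fwd)
  interpret bwd: closed_basins_semiconj "inv h" X G' F by (fact bwd)
  fix \<Omega> assume \<Omega>: "\<Omega> \<in> omega_sets h X"
  then obtain x where x: "x \<in> \<Omega>"
    using fwd.omega_set_nonempty by blast
  let ?\<Gamma> = "omega_limit (inv h) X x"
  have \<Gamma>: "?\<Gamma> \<in> omega_sets (inv h) X"
    using omega_set_subset[OF \<Omega>] x by (auto simp: omega_sets_def)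
  then obtain y where y: "y \<in> ?\<Gamma>"
    using bwd.omega_set_nonempty by blast
  have \<Gamma>_sub: "?\<Gamma> \<subseteq> \<Omega>"
    using omega_limit_subset_closedin_invariant[OF closedin_omega_set[OF \<Omega>] x
        fwd.omega_set_inv_invariant[OF \<Omega>]] .
  have "inv (inv h) = h"
    using fwd.bij_h by (rule inv_inv_eq)
  then have "omega_limit h X y \<subseteq> ?\<Gamma>"
    using omega_limit_subset_closedin_invariant[OF closedin_omega_set[OF \<Gamma>] y
        bwd.omega_set_inv_invariant[OF \<Gamma>]] by simp
  moreover have "omega_limit h X y = \<Omega>"
    using fwd.omega_limit_of_mem_omega_set[OF \<Omega>] y \<Gamma>_sub by blast
  ultimately show "\<Omega> \<in> omega_sets (inv h) X"
    using \<Gamma> \<Gamma>_sub by simp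
qed

lemma omega_sets_inv_eq:
  assumes fwd: "closed_basins_semiconj h X G F"
    and bwd: "closed_basins_semiconj (inv h) X G' F"
  shows "omega_sets (inv h) X = omega_sets h X"
proof
  show "omega_sets h X \<subseteq> omega_sets (inv h) X"
    using fwd bwd by (rule omega_sets_subset_omega_sets_inv)
  have "inv (inv h) = h"
    using closed_basins_semiconj.bij_h[OF fwd] by (rule inv_inv_eq)
  then show "omega_sets (inv h) X \<subseteq> omega_sets h X"
    using omega_sets_subset_omega_sets_inv[OF bwd, of G] fwd by simp
qed

lemma unit_interval_countable_closed_fibres_imp_constant:
  fixes \<psi> :: "real \<Rightarrow> 'a"
  assumes "countable (\<psi> ` {0..1})"
    and fibres: "\<And>y. y \<in> \<psi> ` {0..1} \<Longrightarrow> closed {t \<in> {0..1}. \<psi> t = y}"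
  shows "\<psi> 0 = \<psi> 1"
proof -
  define P where "P y = {t \<in> {0..1}. \<psi> t = y}" for y
  have "P ` \<psi> ` {0..1} - {{}} = {{0..1::real}}"
  proof (rule real_Sierpinski_lemma)
    show "countable (P ` \<psi> ` {0..1} - {{}})"
      using assms(1) by simp
    show "pairwise disjnt (P ` \<psi> ` {0..1} - {{}})"
    proof (rule pairwiseI)
      fix A B assume "A \<in> P ` \<psi> ` {0..1} - {{}}" "B \<in> P ` \<psi> ` {0..1} - {{}}" "A \<noteq> B"
      then obtain y y' where AB: "A = P y" "B = P y'"
        by blast
      with \<open>A \<noteq> B\<close> have "y \<noteq> y'"
        by auto
      then show "disjnt A B"
        unfolding AB by (auto simp: disjnt_def P_def)
    qed
    show "\<Union> (P ` \<psi> ` {0..1} - {{}}) = {0..1}"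
    proof
      show "\<Union> (P ` \<psi> ` {0..1} - {{}}) \<subseteq> {0..1}"
        by (auto simp: P_def)
      show "{0..1} \<subseteq> \<Union> (P ` \<psi> ` {0..1} - {{}})"
      proof
        fix t :: real assume "t \<in> {0..1}"
        then have "t \<in> P (\<psi> t)" "\<psi> t \<in> \<psi> ` {0..1}"
          by (auto simp: P_def)
        then show "t \<in> \<Union> (P ` \<psi> ` {0..1} - {{}})"
          by blast
      qed
    qed
    fix C assume "C \<in> P ` \<psi> ` {0..1} - {{}}"
    then obtain y where y: "y \<in> \<psi> ` {0..1}" "C = P y" "C \<noteq> {}"
      by blast
    then show "closed C \<and> C \<noteq> {}"
      using fibres[OF y(1)] by (simp add: P_def)
  qed simp
  moreover have "\<psi> 0 \<in> \<psi> ` {0..1}" "0 \<in> P (\<psi> 0)"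
    by (auto simp: P_def)
  ultimately have "P (\<psi> 0) = {0..1}"
    by blast
  then have "1 \<in> P (\<psi> 0)"
    by simp
  then show ?thesis
    by (simp add: P_def)
qed

lemma path_connected_countable_closedin_fibres_imp_constant:
  assumes "path_connected S" "countable (\<phi> ` S)"
    and fibres: "\<And>y. y \<in> \<phi> ` S \<Longrightarrow> closedin (top_of_set S) {x \<in> S. \<phi> x = y}"
    and "a \<in> S" "b \<in> S"
  shows "\<phi> a = \<phi> b"
proof -
  obtain \<gamma> where \<gamma>: "path \<gamma>" "path_image \<gamma> \<subseteq> S" "pathstart \<gamma> = a" "pathfinish \<gamma> = b"
    using assms(1,4,5) unfolding path_connected_def by blast
  have \<gamma>_cont: "continuous_on {0..1} \<gamma>" and \<gamma>_image: "\<gamma> ` {0..1} \<subseteq> S"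
    using \<gamma>(1,2) by (simp_all add: path_def path_image_def)
  then have \<gamma>_funcset: "\<gamma> \<in> {0..1} \<rightarrow> S"
    by (simp add: image_subset_iff_funcset)
  have "(\<phi> \<circ> \<gamma>) 0 = (\<phi> \<circ> \<gamma>) 1"
  proof (rule unit_interval_countable_closed_fibres_imp_constant[of "\<phi> \<circ> \<gamma>"])
    have "(\<phi> \<circ> \<gamma>) ` {0..1} \<subseteq> \<phi> ` S"
      using \<gamma>_image by auto
    then show "countable ((\<phi> \<circ> \<gamma>) ` {0..1})"
      using assms(2) by (rule countable_subset)
    show "closed {t \<in> {0..1}. (\<phi> \<circ> \<gamma>) t = y}" if "y \<in> (\<phi> \<circ> \<gamma>) ` {0..1}" for y
    proof -
      have "y \<in> \<phi> ` S"
        using that \<gamma>_image by auto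
      then have "closedin (top_of_set {0..1}) ({0..1} \<inter> \<gamma> -` {x \<in> S. \<phi> x = y})"
        by (rule continuous_closedin_preimage_gen[OF \<gamma>_cont \<gamma>_funcset fibres])
      moreover have "{0..1} \<inter> \<gamma> -` {x \<in> S. \<phi> x = y} = {t \<in> {0..1}. (\<phi> \<circ> \<gamma>) t = y}"
        using \<gamma>_image by auto
      ultimately show ?thesis
        using closedin_closed_trans[OF _ closed_atLeastAtMost] by metis
    qed
  qed
  then show ?thesis
    using \<gamma>(3,4) by (simp add: pathstart_def pathfinish_def)
qed

lemma alpha_limit_eq_omega_limit_inv: "alpha_limit f X = omega_limit (inv f) X"
  by (intro ext) (simp add: alpha_limit_def omega_limit_def)

lemma alpha_sets_eq_omega_sets_inv: "alpha_sets f X = omega_sets (inv f) X"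
  by (simp add: alpha_sets_def omega_sets_def alpha_limit_eq_omega_limit_inv)

lemma dom_rep_eq_dom_attr_inv: "dom_rep f X = dom_attr (inv f) X"
  by (intro ext) (simp add: dom_rep_def dom_attr_def alpha_limit_eq_omega_limit_inv)

lemma bwd_orbit_eq_fwd_orbit_inv: "bwd_orbit f = fwd_orbit (inv f)"
  by (intro ext) (simp add: bwd_orbit_def fwd_orbit_def)

lemma closed_basins_rev_eq_closed_basins_inv: "closed_basins_rev f X = closed_basins (inv f) X"
  by (simp add: closed_basins_rev_def closed_basins_def alpha_sets_eq_omega_sets_inv
      dom_rep_eq_dom_attr_inv)

lemma closed_basins_semiconj_inv:
  assumes f_bij: "bij f" and f_cont: "continuous_on UNIV f"
    and finv_cont: "continuous_on UNIV (inv f)"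
    and F_cont: "continuous_on X F" and F_inj: "inj_on F X"
    and F_conj: "\<forall>x\<in>X. F (f x) = g (F x)" and g_bij: "bij g"
    and ginv_basins: "closed_basins_rev g UNIV"
    and T4b: "\<forall>\<Gamma>\<in>alpha_sets f X. \<exists>\<xi>\<in>dom_rep f X \<Gamma>. precompact_in X (bwd_orbit f \<xi>)"
  shows "closed_basins_semiconj (inv f) X (inv g) F"
proof unfold_locales
  show "bij (inv f)"
    using f_bij by (rule bij_imp_bij_inv)
  show "continuous_on UNIV (inv (inv f))"
    using f_cont by (simp add: inv_inv_eq[OF f_bij])
  show "\<forall>x\<in>X. inv f x \<in> X \<longrightarrow> F (inv f x) = inv g (F x)"
  proof (intro ballI impI)
    fix x assume "inv f x \<in> X"
    have "f (inv f x) = x"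
      using f_bij by (simp add: bij_is_surj surj_f_inv_f)
    then have "g (F (inv f x)) = F x"
      using bspec[OF F_conj \<open>inv f x \<in> X\<close>] by simp
    then show "F (inv f x) = inv g (F x)"
      using g_bij by (simp add: bij_inv_eq_iff)
  qed
  show "closed_basins (inv g) UNIV"
    using ginv_basins by (simp add: closed_basins_rev_eq_closed_basins_inv)
  show "\<exists>\<xi>\<in>dom_attr (inv f) X \<Gamma>. precompact_in X (fwd_orbit (inv f) \<xi>)"
    if "\<Gamma> \<in> omega_sets (inv f) X" for \<Gamma>
    using T4b that
    by (simp add: alpha_sets_eq_omega_sets_inv dom_rep_eq_dom_attr_inv bwd_orbit_eq_fwd_orbit_inv)
qed (use finv_cont F_cont F_inj in auto)

theorem corollary18:
  fixes f :: "'m::metric_space \<Rightarrow> 'm" and X :: "'m set"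
    and g :: "'z::metric_space \<Rightarrow> 'z" and F :: "'m \<Rightarrow> 'z"
  assumes sepM: "separable_space TYPE('m)"
    and f_bij: "bij f" and f_cont: "continuous_on UNIV f" and finv_cont: "continuous_on UNIV (inv f)"
    and X_inv: "f ` X \<subseteq> X" and X_pc: "path_connected X" and X_ne: "X \<noteq> {}"
    and sepZ: "separable_space TYPE('z)"
    and g_bij: "bij g" and g_cont: "continuous_on UNIV g" and ginv_cont: "continuous_on UNIV (inv g)"
    and F_cont: "continuous_on X F" and F_conj: "\<forall>x\<in>X. F (f x) = g (F x)"
    and g_basins: "closed_basins g UNIV" and ginv_basins: "closed_basins_rev g UNIV"
    and T2: "\<forall>xi\<in>X. precompact_in X (fwd_orbit f xi) \<or> precompact_in X (bwd_orbit f xi)"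
    and T3: "countable (omega_sets f X \<union> alpha_sets f X)"
    and T4a: "\<forall>\<Omega>\<in>omega_sets f X. \<exists>xi\<in>dom_attr f X \<Omega>. precompact_in X (fwd_orbit f xi)"
    and T4b: "\<forall>\<Gamma>\<in>alpha_sets f X. \<exists>xi\<in>dom_rep f X \<Gamma>. precompact_in X (bwd_orbit f xi)"
    and F_inj: "inj_on F X"
  shows "\<exists>S. omega_sets f X \<union> alpha_sets f X = {S}"
proof -
  have fwd: "closed_basins_semiconj f X g F"
    by unfold_locales (use f_bij f_cont finv_cont F_cont F_inj F_conj g_basins T4a in auto)
  have bwd: "closed_basins_semiconj (inv f) X (inv g) F"
    by (rule closed_basins_semiconj_inv[OF f_bij f_cont finv_cont F_cont F_inj F_conj g_bij
          ginv_basins T4b])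
  have alpha_eq_omega: "alpha_sets f X = omega_sets f X"
    using omega_sets_inv_eq[OF fwd bwd] by (simp add: alpha_sets_eq_omega_sets_inv)
  have omega_sets_eq: "omega_sets f X = omega_limit f X ` X"
    by (auto simp: omega_sets_def)
  have omega_limit_const: "omega_limit f X \<xi> = omega_limit f X \<eta>" if "\<xi> \<in> X" "\<eta> \<in> X" for \<xi> \<eta>
  proof (rule path_connected_countable_closedin_fibres_imp_constant[OF X_pc _ _ that])
    show "countable (omega_limit f X ` X)"
      using T3 by (simp add: omega_sets_eq)
    show "closedin (top_of_set X) {x \<in> X. omega_limit f X x = \<Omega>}"
      if "\<Omega> \<in> omega_limit f X ` X" for \<Omega>
    proof -
      have "\<Omega> \<in> omega_sets f X"
        using that by (simp add: omega_sets_eq)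
      then show ?thesis
        using closed_basins_semiconj.closedin_dom_attr[OF fwd X_inv] by (simp add: dom_attr_def)
    qed
  qed
  obtain \<xi> where "\<xi> \<in> X"
    using X_ne by blast
  then have "omega_limit f X ` X = {omega_limit f X \<xi>}"
    using omega_limit_const by blast
  then have "omega_sets f X = {omega_limit f X \<xi>}"
    by (simp add: omega_sets_eq)
  then show ?thesis
    using alpha_eq_omega by blast
qed

end
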